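(* Let $F$ be an infinite family of index sets linearly ordered by $\subseteq$ such that $I_1\subsetneq I_2$ in $F$ implies $I_2\setminus I_1$ is infinite. If $\langle F;\subseteq\rangle$ is densely ordered, then $|\overline{F}|\ge 2^{\omega}$.
   Context: A predicate symbol $R$ is non-empty for a theory $T$ if $T\vdash\exists\bar x R(\bar x)$, empty otherwise. A complete theory $T$ in a predicate language is language uniform (LU) if for each arity $m$, every permutation of the set of $m$-ary symbols non-empty for $T$ preserves $T$. Let $T_0$ be a complete LU-theory in a relational language $\Sigma_0$, let $n\ge1$, and let $\{R_k\mid k\in I_0\}$, $I_0$ infinite, be the set of $n$-ary symbols of $\Sigma_0$ that are non-empty for $T_0$. An index set is an infinite $I\subseteq I_0$ with $|I|=|I_0|$ and $|I_0\setminus I|$ equal to the number of $n$-ary symbols of $\Sigma_0$ that are empty for $T_0$. For infinite $F'\subseteq F$: $\bigcup F'$ is an (upper) accumulation point of $F'$ if $\bigcup F'\notin F'$, and $\bigcap F'$ is a (lower) accumulation point of $F'$ if $\bigcap F'\notin F'$. The closure $\overline{F}$ is the set consisting of the elements of $F$ together with all accumulation points of infinite subfamilies $F'\subseteq F$, ordered by $\subseteq$. *)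

theory Defs
  imports Main "HOL-Library.Equipollence"
begin

text \<open>Index sets relative to the infinite set I0 of indices of non-empty n-ary symbols
  and the set E of n-ary symbols that are empty for T0 (only its cardinality matters).\<close>
definition index_set :: "'k set \<Rightarrow> 'e set \<Rightarrow> 'k set \<Rightarrow> bool" where
  "index_set I0 E I \<longleftrightarrow> infinite I \<and> I \<subseteq> I0 \<and> I \<approx> I0 \<and> (I0 - I) \<approx> E"

definition upper_acc :: "'k set set \<Rightarrow> 'k set set" where
  "upper_acc F = {\<Union>F' | F'. F' \<subseteq> F \<and> infinite F' \<and> \<Union>F' \<notin> F'}"

definition lower_acc :: "'k set set \<Rightarrow> 'k set set" where
  "lower_acc F = {\<Inter>F' | F'. F' \<subseteq> F \<and> infinite F' \<and> \<Inter>F' \<notin> F'}"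

definition closureF :: "'k set set \<Rightarrow> 'k set set" where
  "closureF F = F \<union> upper_acc F \<union> lower_acc F"

end

theory Submission
  imports Defs
begin

text \<open>Only density matters. Starting from \<open>A \<subset> B\<close> in \<open>F\<close>, every infinite binary sequence \<open>x\<close>
  steers a sequence of nested intervals: at step \<open>n\<close> a point of \<open>F\<close> strictly between the current
  endpoints replaces the lower endpoint if \<open>x n\<close> holds and the upper one otherwise. When \<open>x\<close> has
  infinitely many true bits, the lower endpoints increase strictly infinitely often, so their union
  is an upper accumulation point of \<open>F\<close>. At the first bit where two sequences differ, an element of
  \<open>F\<close> separates the two unions, so there are at least continuum many such points.\<close>

locale dense_interval =
  fixes F :: "'a set set" and A B :: "'a set"
  assumes dense: "\<And>C D. C \<in> F \<Longrightarrow> D \<in> F \<Longrightarrow> C \<subset> D \<Longrightarrow> \<exists>M\<in>F. C \<subset> M \<and> M \<subset> D"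
    and A_in: "A \<in> F" and B_in: "B \<in> F" and A_psubset_B: "A \<subset> B"
begin

definition between :: "'a set \<Rightarrow> 'a set \<Rightarrow> 'a set" where
  "between C D = (SOME M. M \<in> F \<and> C \<subset> M \<and> M \<subset> D)"

lemma between:
  assumes "C \<in> F" "D \<in> F" "C \<subset> D"
  shows "between C D \<in> F" "C \<subset> between C D" "between C D \<subset> D"
  using someI_ex[OF dense[OF assms, unfolded Bex_def]] unfolding between_def by blast+

primrec nested :: "(nat \<Rightarrow> bool) \<Rightarrow> nat \<Rightarrow> 'a set \<times> 'a set" where
  "nested x 0 = (A, B)"
| "nested x (Suc n) =
    (if x n then (between (fst (nested x n)) (snd (nested x n)), snd (nested x n))
     else (fst (nested x n), between (fst (nested x n)) (snd (nested x n))))"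

abbreviation lo :: "(nat \<Rightarrow> bool) \<Rightarrow> nat \<Rightarrow> 'a set" where
  "lo x n \<equiv> fst (nested x n)"

abbreviation hi :: "(nat \<Rightarrow> bool) \<Rightarrow> nat \<Rightarrow> 'a set" where
  "hi x n \<equiv> snd (nested x n)"

lemma nested_in_F: "lo x n \<in> F \<and> hi x n \<in> F \<and> lo x n \<subset> hi x n"
proof (induction n)
  case 0
  show ?case using A_in B_in A_psubset_B by simp
next
  case (Suc n)
  then show ?case
    using between[of "lo x n" "hi x n"] by simp
qed

lemma lo_Suc: "lo x n \<subseteq> lo x (Suc n)"
  and lo_Suc_strict: "x n \<Longrightarrow> lo x n \<subset> lo x (Suc n)"
  and hi_Suc: "hi x (Suc n) \<subseteq> hi x n"
  using nested_in_F[of x n] between[of "lo x n" "hi x n"] by auto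

lemma lo_mono: "m \<le> n \<Longrightarrow> lo x m \<subseteq> lo x n"
  using lift_Suc_mono_le[of "lo x"] lo_Suc by blast

lemma hi_antimono: "m \<le> n \<Longrightarrow> hi x n \<subseteq> hi x m"
  using lift_Suc_antimono_le[of "hi x"] hi_Suc by blast

lemma lo_subset_hi: "lo x m \<subseteq> hi x n"
proof -
  have "lo x m \<subseteq> lo x (max m n)" by (simp add: lo_mono)
  also have "\<dots> \<subseteq> hi x (max m n)" using nested_in_F by blast
  also have "\<dots> \<subseteq> hi x n" by (simp add: hi_antimono)
  finally show ?thesis .
qed

lemma nested_cong: "(\<And>i. i < n \<Longrightarrow> x i = y i) \<Longrightarrow> nested x n = nested y n"
  by (induction n) auto

definition limit :: "(nat \<Rightarrow> bool) \<Rightarrow> 'a set" where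
  "limit x = (\<Union>n. lo x n)"

lemma limit_in_upper_acc:
  assumes "infinite {n. x n}"
  shows "limit x \<in> upper_acc F"
proof -
  have sub: "range (lo x) \<subseteq> F" using nested_in_F by blast
  have notin: "limit x \<notin> range (lo x)"
  proof
    assume "limit x \<in> range (lo x)"
    then obtain n where n: "limit x = lo x n" by blast
    obtain k where k: "n \<le> k" "x k" using assms by (auto simp: infinite_nat_iff_unbounded_le)
    have "lo x (Suc k) \<subseteq> lo x k" using n lo_mono[OF k(1)] unfolding limit_def by blast
    with lo_Suc_strict[of x k, OF k(2)] show False by blast
  qed
  have "infinite (range (lo x))"
  proof
    assume "finite (range (lo x))"
    moreover have "subset.chain UNIV (range (lo x))"
      using nat_le_linear lo_mono unfolding subset.chain_def by blast
    ultimately have "\<Union>(range (lo x)) \<in> range (lo x)" using Union_in_chain by blast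
    with notin show False unfolding limit_def by blast
  qed
  with sub notin show ?thesis unfolding upper_acc_def limit_def by blast
qed

lemma limit_psubset:
  assumes agree: "\<And>i. i < k \<Longrightarrow> x i = y i" and "\<not> x k" "y k" and "infinite {n. y n}"
  shows "limit x \<subset> limit y"
proof -
  define M where "M = between (lo x k) (hi x k)"
  have "hi x (Suc k) = M" "lo y (Suc k) = M"
    using \<open>\<not> x k\<close> \<open>y k\<close> nested_cong[OF agree] by (simp_all add: M_def)
  obtain j where j: "Suc k \<le> j" "y j"
    using \<open>infinite {n. y n}\<close> by (auto simp: infinite_nat_iff_unbounded_le)
  have "limit x \<subseteq> M"
    using lo_subset_hi \<open>hi x (Suc k) = M\<close> unfolding limit_def by blast
  also have "M \<subset> lo y (Suc j)"
    using \<open>lo y (Suc k) = M\<close> lo_mono[OF j(1)] lo_Suc_strict[of y j, OF j(2)] by blast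
  also have "lo y (Suc j) \<subseteq> limit y" unfolding limit_def by blast
  finally show ?thesis .
qed

lemma inj_on_limit: "inj_on limit {x. infinite {n. x n}}"
proof (rule inj_onI, rule ccontr)
  fix x y
  assume inf: "x \<in> {x. infinite {n. x n}}" "y \<in> {x. infinite {n. x n}}"
    and eq: "limit x = limit y" and "x \<noteq> y"
  then obtain i where "x i \<noteq> y i" by blast
  define k where "k = (LEAST i. x i \<noteq> y i)"
  have "x k \<noteq> y k" unfolding k_def by (rule LeastI) fact
  moreover have agree: "\<And>i. i < k \<Longrightarrow> x i = y i" unfolding k_def using not_less_Least by blast
  ultimately have "limit x \<subset> limit y \<or> limit y \<subset> limit x"
    using limit_psubset[of k x y] limit_psubset[of k y x] inf by (cases "x k") auto
  with eq show False by blast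
qed

lemma infinitely_true_lepoll_upper_acc: "{x :: nat \<Rightarrow> bool. infinite {n. x n}} \<lesssim> upper_acc F"
proof -
  have image: "limit ` {x. infinite {n. x n}} \<subseteq> upper_acc F"
    using limit_in_upper_acc by (intro image_subsetI) simp
  show ?thesis
    unfolding lepoll_def using inj_on_limit image by blast
qed

end

lemma Pow_lepoll_infinitely_true: "Pow (UNIV :: nat set) \<lesssim> {x :: nat \<Rightarrow> bool. infinite {n. x n}}"
proof -
  define code where "code S n \<longleftrightarrow> odd n \<or> n div 2 \<in> S" for S :: "nat set" and n
  have "inj_on code (Pow UNIV)"
  proof (rule inj_onI)
    fix S T assume "code S = code T"
    then have "code S (2 * n) = code T (2 * n)" for n by simp
    then show "S = T" by (auto simp: code_def)
  qed
  moreover have "infinite {n. code S n}" for S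
    unfolding infinite_nat_iff_unbounded_le
  proof
    fix m
    show "\<exists>n\<ge>m. n \<in> {n. code S n}" by (intro exI[of _ "Suc (2 * m)"]) (simp add: code_def)
  qed
  then have "code ` Pow UNIV \<subseteq> {x. infinite {n. x n}}" by blast
  ultimately show ?thesis unfolding lepoll_def by blast
qed

theorem proposition4p9:
  fixes I0 :: "'k set" and E :: "'e set" and F :: "'k set set"
  assumes "infinite I0"
    and "\<forall>I\<in>F. index_set I0 E I"
    and "infinite F"
    and "\<forall>A\<in>F. \<forall>B\<in>F. A \<subseteq> B \<or> B \<subseteq> A"
    and "\<forall>A\<in>F. \<forall>B\<in>F. A \<subset> B \<longrightarrow> infinite (B - A)"
    and "\<forall>A\<in>F. \<forall>B\<in>F. A \<subset> B \<longrightarrow> (\<exists>C\<in>F. A \<subset> C \<and> C \<subset> B)"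
  shows "Pow (UNIV :: nat set) \<lesssim> closureF F"
proof -
  obtain A where "A \<in> F"
    using infinite_imp_nonempty[OF \<open>infinite F\<close>] by blast
  moreover obtain B where "B \<in> F" "B \<noteq> A"
    using infinite_imp_nonempty[OF infinite_remove[OF \<open>infinite F\<close>, of A]] by blast
  moreover have "A \<subseteq> B \<or> B \<subseteq> A" using assms(4) \<open>A \<in> F\<close> \<open>B \<in> F\<close> by blast
  ultimately obtain C D where "C \<in> F" "D \<in> F" "C \<subset> D" by blast
  then interpret dense_interval F C D
    by unfold_locales (simp_all add: assms(6))
  note Pow_lepoll_infinitely_true
  also note infinitely_true_lepoll_upper_acc
  also have "upper_acc F \<lesssim> closureF F" unfolding closureF_def by (rule subset_imp_lepoll) blast
  finally show ?thesis .
qed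

end
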